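(* Let $g:\mathbb{R}^n\to\mathbb{R}\cup\{+\infty\}$ be a proper closed convex function and let $f=f_1-f_2$, where $f_1,f_2:\mathbb{R}^n\to\mathbb{R}$ are convex differentiable functions such that $\nabla f_1$ is Lipschitz continuous with modulus $L>0$, $\nabla f_2$ is Lipschitz continuous with modulus $l\ge 0$, and $L\ge l$. Let $F=f+g$, and assume $\inf F>-\infty$ and that this infimum is attained. Let $\{x^k\}$ be generated by Algorithm 1 (described in the context) with $\bar\beta:=\sup_k\beta_k<\sqrt{L/(L+l)}$, and let $\Omega$ be the set of accumulation points of $\{x^k\}$. Then $\zeta:=\lim_{k\to\infty}F(x^k)$ exists and $F\equiv\zeta$ on $\Omega$.
   Context: For a proper closed convex $h$, $\mathrm{Prox}_h(v)=\arg\min_{x\in\mathbb{R}^n}\{h(x)+\tfrac12\|x-v\|^2\}$. Algorithm 1 (proximal gradient algorithm with extrapolation): choose $x^0\in\operatorname{dom} g$ and $\{\beta_k\}\subseteq[0,\sqrt{L/(L+l)}]$, set $x^{-1}=x^0$, and for $k=0,1,2,\dots$ set $y^k=x^k+\beta_k(x^k-x^{k-1})$ and $x^{k+1}=\mathrm{Prox}_{\frac1L g}\big(y^k-\tfrac1L\nabla f(y^k)\big)$. *)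

theory Defs
  imports "HOL-Analysis.Analysis"
begin

text \<open>Extended-real-valued functions g : R^n -> R \<union> {+inf} are modelled as maps into ereal
  that never take the value -inf.\<close>

definition proper_fun :: "('a \<Rightarrow> ereal) \<Rightarrow> bool" where
  "proper_fun g \<longleftrightarrow> (\<forall>x. g x \<noteq> -\<infinity>) \<and> (\<exists>x. g x \<noteq> \<infinity>)"

definition closed_fun :: "('a::topological_space \<Rightarrow> ereal) \<Rightarrow> bool" where
  "closed_fun g \<longleftrightarrow> closed {(x, r::real). g x \<le> ereal r}"

definition convex_fun :: "('a::real_vector \<Rightarrow> ereal) \<Rightarrow> bool" where
  "convex_fun g \<longleftrightarrow> (\<forall>x y t. 0 \<le> t \<and> t \<le> 1 \<longrightarrow>
      g ((1 - t) *\<^sub>R x + t *\<^sub>R y) \<le> ereal (1 - t) * g x + ereal t * g y)"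

definition is_prox :: "('a::real_normed_vector \<Rightarrow> ereal) \<Rightarrow> 'a \<Rightarrow> 'a \<Rightarrow> bool" where
  "is_prox h v z \<longleftrightarrow> (\<forall>w. h z + ereal ((norm (z - v))\<^sup>2 / 2) \<le> h w + ereal ((norm (w - v))\<^sup>2 / 2))"

definition accumulation_point :: "(nat \<Rightarrow> 'a::topological_space) \<Rightarrow> 'a \<Rightarrow> bool" where
  "accumulation_point x z \<longleftrightarrow> (\<exists>r. strict_mono r \<and> (x \<circ> r) \<longlonglongrightarrow> z)"

end

theory Submission
  imports Defs
begin

(*
  The Lyapunov function H k = F (x k) + L/2 * norm (x k - x (k - 1))^2 decreases along the
  iteration.  The descent lemma for f1, the gradient inequality for the convex f2 and the
  three-point inequality of the proximal step combine to
    F (x (k+1)) + L/2 * norm (x (k+1) - x k)^2 <= F (x k) + (L+l)/2 * (beta k * norm (x k - x (k-1)))^2,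
  so H decreases by at least (L - (L+l) * beta_sup^2)/2 * norm (x k - x (k-1))^2 per step.
  Being bounded below by inf F, H converges and the steps tend to zero, hence F (x k) converges
  to some zeta.  At an accumulation point z, closedness of g gives F z <= zeta, and the proximal
  inequality tested against z gives the reverse inequality in the limit.
*)

lemma norm_add_power2:
  fixes a b :: "'a::real_inner"
  shows "(norm (a + b))\<^sup>2 = (norm a)\<^sup>2 + 2 * (a \<bullet> b) + (norm b)\<^sup>2"
  by (simp add: power2_norm_eq_inner inner_add inner_commute)

lemma le_of_forall_le_add_scaled:
  fixes a b c :: real
  assumes le: "\<And>t. 0 < t \<Longrightarrow> t < 1 \<Longrightarrow> a \<le> b + t * c"
  shows "a \<le> b"
proof (rule field_le_epsilon)
  fix e :: real assume "0 < e"
  define t where "t = min (1/2) (e / (\<bar>c\<bar> + 1))"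
  have t: "0 < t" "t < 1" using \<open>0 < e\<close> by (auto simp: t_def)
  have "t * c \<le> t * \<bar>c\<bar>" using t by (simp add: mult_left_mono)
  also have "\<dots> \<le> e / (\<bar>c\<bar> + 1) * (\<bar>c\<bar> + 1)"
    using t by (intro mult_mono) (auto simp: t_def)
  finally have "t * c \<le> e" by simp
  then show "a \<le> b + e" using le[OF t] by linarith
qed

lemma mult_square_less_of_less_sqrt_divide:
  fixes b L M :: real
  assumes "0 \<le> b" "b < sqrt (L / M)" "M > 0"
  shows "M * b\<^sup>2 < L"
proof -
  have "0 < sqrt (L / M)" using assms(1,2) by linarith
  then have "0 < L / M" by simp
  have "b\<^sup>2 < (sqrt (L / M))\<^sup>2" using assms(1,2) by (intro power_strict_mono) auto
  then have "b\<^sup>2 < L / M" using \<open>0 < L / M\<close> by simp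
  then show ?thesis using \<open>M > 0\<close> by (simp add: field_simps)
qed

lemma convex_fun_cmul:
  fixes g :: "'a::real_vector \<Rightarrow> ereal"
  assumes "convex_fun g" "\<And>z. g z \<noteq> -\<infinity>" "c > 0"
  shows "convex_fun (\<lambda>z. ereal c * g z)"
  unfolding convex_fun_def
proof (intro allI impI)
  fix x y :: 'a and t :: real assume t: "0 \<le> t \<and> t \<le> 1"
  define u where "u = (1 - t) *\<^sub>R x + t *\<^sub>R y"
  have "g u \<le> ereal (1 - t) * g x + ereal t * g y"
    using assms(1) t by (simp add: convex_fun_def u_def)
  then show "ereal c * g u \<le> ereal (1 - t) * (ereal c * g x) + ereal t * (ereal c * g y)"
    using t \<open>c > 0\<close> assms(2)[of x] assms(2)[of y] assms(2)[of u]
    by (cases "g x"; cases "g y"; cases "g u")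
       (auto simp: algebra_simps dest: mult_left_mono[where c = c])
qed

lemma is_prox_three_point:
  fixes h :: "'a::real_inner \<Rightarrow> ereal"
  assumes convex: "convex_fun h" and ninf: "\<And>q. h q \<noteq> -\<infinity>"
    and prox: "is_prox h v z" and hw: "h w \<noteq> \<infinity>"
  shows "h z \<noteq> \<infinity>"
    and "real_of_ereal (h z) + (norm (z - v))\<^sup>2 / 2 + (norm (w - z))\<^sup>2 / 2
           \<le> real_of_ereal (h w) + (norm (w - v))\<^sup>2 / 2"
proof -
  have prox_at: "h z + ereal ((norm (z - v))\<^sup>2 / 2) \<le> h q + ereal ((norm (q - v))\<^sup>2 / 2)" for q
    using prox by (simp add: is_prox_def)
  obtain b where b: "h w = ereal b" using hw ninf[of w] by (cases "h w") auto
  show hz: "h z \<noteq> \<infinity>" using prox_at[of w] b by auto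
  obtain a where a: "h z = ereal a" using hz ninf[of z] by (cases "h z") auto
  define Q where "Q = (z - v) \<bullet> (w - z)"
  \<comment> \<open>Compare z with the points of the segment towards w and let them approach z.\<close>
  have "a \<le> b + Q"
  proof (rule le_of_forall_le_add_scaled)
    fix t :: real assume t: "0 < t" "t < 1"
    define u where "u = (1 - t) *\<^sub>R z + t *\<^sub>R w"
    have "h u \<le> ereal ((1 - t) * a + t * b)"
      using convex t a b unfolding convex_fun_def u_def
      by (metis less_eq_real_def times_ereal.simps(1) plus_ereal.simps(1))
    moreover have "h z + ereal ((norm (z - v))\<^sup>2 / 2) \<le> h u + ereal ((norm (u - v))\<^sup>2 / 2)"
      by (rule prox_at)
    ultimately have "a + (norm (z - v))\<^sup>2 / 2 \<le> (1 - t) * a + t * b + (norm (u - v))\<^sup>2 / 2"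
      using a ninf[of u] by (cases "h u") auto
    moreover have "(norm (u - v))\<^sup>2 = (norm (z - v))\<^sup>2 + t * (2 * Q) + t\<^sup>2 * (norm (w - z))\<^sup>2"
    proof -
      have "u - v = (z - v) + t *\<^sub>R (w - z)" by (simp add: u_def algebra_simps)
      then show ?thesis by (simp only: norm_add_power2) (simp add: Q_def power_mult_distrib)
    qed
    ultimately have "t * a \<le> t * (b + Q + t * ((norm (w - z))\<^sup>2 / 2))"
      by (simp add: field_simps power2_eq_square)
    then show "a \<le> b + Q + t * ((norm (w - z))\<^sup>2 / 2)"
      using t by simp
  qed
  moreover have "(norm (w - v))\<^sup>2 = (norm (z - v))\<^sup>2 + 2 * Q + (norm (w - z))\<^sup>2"
    using norm_add_power2[of "z - v" "w - z"] by (simp add: Q_def)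
  ultimately show "real_of_ereal (h z) + (norm (z - v))\<^sup>2 / 2 + (norm (w - z))\<^sup>2 / 2
           \<le> real_of_ereal (h w) + (norm (w - v))\<^sup>2 / 2"
    by (simp add: a b field_simps)
qed

lemma prox_gradient_step:
  fixes g :: "'a::real_inner \<Rightarrow> ereal"
  assumes convex: "convex_fun g" and ninf: "\<And>q. g q \<noteq> -\<infinity>" and L: "L > 0"
    and prox: "is_prox (\<lambda>q. ereal (1 / L) * g q) (y - (1 / L) *\<^sub>R D) z" and gw: "g w \<noteq> \<infinity>"
  shows "g z \<noteq> \<infinity>"
    and "real_of_ereal (g z) + D \<bullet> (z - y) + L / 2 * (norm (z - y))\<^sup>2 + L / 2 * (norm (w - z))\<^sup>2
           \<le> real_of_ereal (g w) + D \<bullet> (w - y) + L / 2 * (norm (w - y))\<^sup>2"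
proof -
  let ?h = "\<lambda>q. ereal (1 / L) * g q"
  have h_convex: "convex_fun ?h" using convex ninf L by (intro convex_fun_cmul) auto
  have h_ninf: "?h q \<noteq> -\<infinity>" for q using ninf[of q] L by (cases "g q") auto
  have hw: "?h w \<noteq> \<infinity>" using gw ninf[of w] by (cases "g w") auto
  note three_point = is_prox_three_point[OF h_convex h_ninf prox hw]
  show "g z \<noteq> \<infinity>" using three_point(1) L by auto
  have expand: "(norm (q - (y - (1 / L) *\<^sub>R D)))\<^sup>2
      = (norm (q - y))\<^sup>2 + 2 / L * (D \<bullet> (q - y)) + (norm D)\<^sup>2 / L\<^sup>2" for q
  proof -
    have "q - (y - (1 / L) *\<^sub>R D) = (q - y) + (1 / L) *\<^sub>R D" by (simp add: algebra_simps)
    then show ?thesis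
      by (simp only: norm_add_power2) (simp add: power_mult_distrib inner_commute power_divide)
  qed
  \<comment> \<open>After scaling by L, the term (norm D)^2 / (2 * L) appears on both sides and cancels.\<close>
  have "L * (real_of_ereal (g z) / L + (norm (z - (y - (1 / L) *\<^sub>R D)))\<^sup>2 / 2 + (norm (w - z))\<^sup>2 / 2)
      \<le> L * (real_of_ereal (g w) / L + (norm (w - (y - (1 / L) *\<^sub>R D)))\<^sup>2 / 2)"
    using three_point(2) L by (intro mult_left_mono) (auto simp: real_of_ereal_mult)
  moreover have "L * (real_of_ereal (g z) / L + (norm (z - (y - (1 / L) *\<^sub>R D)))\<^sup>2 / 2 + (norm (w - z))\<^sup>2 / 2)
      = real_of_ereal (g z) + D \<bullet> (z - y) + L / 2 * (norm (z - y))\<^sup>2 + L / 2 * (norm (w - z))\<^sup>2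
        + (norm D)\<^sup>2 / (2 * L)"
    using L unfolding expand by (simp add: field_simps power2_eq_square)
  moreover have "L * (real_of_ereal (g w) / L + (norm (w - (y - (1 / L) *\<^sub>R D)))\<^sup>2 / 2)
      = real_of_ereal (g w) + D \<bullet> (w - y) + L / 2 * (norm (w - y))\<^sup>2 + (norm D)\<^sup>2 / (2 * L)"
    using L unfolding expand by (simp add: field_simps power2_eq_square)
  ultimately show "real_of_ereal (g z) + D \<bullet> (z - y) + L / 2 * (norm (z - y))\<^sup>2 + L / 2 * (norm (w - z))\<^sup>2
           \<le> real_of_ereal (g w) + D \<bullet> (w - y) + L / 2 * (norm (w - y))\<^sup>2"
    by linarith
qed

lemma descent_lemma:
  fixes f :: "'a::euclidean_space \<Rightarrow> real"
  assumes grad: "\<And>z. (f has_derivative (\<lambda>h. G z \<bullet> h)) (at z)"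
    and lip: "C-lipschitz_on UNIV G"
  shows "f b \<le> f a + G a \<bullet> (b - a) + C / 2 * (norm (b - a))\<^sup>2"
proof -
  define \<phi> where "\<phi> t = f (a + t *\<^sub>R (b - a)) - t * (G a \<bullet> (b - a)) - C / 2 * t\<^sup>2 * (norm (b - a))\<^sup>2" for t
  have deriv: "(\<phi> has_derivative (\<lambda>h. h * ((G (a + t *\<^sub>R (b - a)) - G a) \<bullet> (b - a) - C * t * (norm (b - a))\<^sup>2)))
          (at t within {0..1})" for t
  proof -
    have "((\<lambda>t. f (a + t *\<^sub>R (b - a))) has_derivative (\<lambda>h. G (a + t *\<^sub>R (b - a)) \<bullet> (h *\<^sub>R (b - a))))
            (at t within {0..1})"
      by (rule has_derivative_compose[where g = f, OF _ grad]) (auto intro!: derivative_eq_intros)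
    then show ?thesis unfolding \<phi>_def
      by (auto intro!: derivative_eq_intros simp: algebra_simps inner_diff_left power2_eq_square)
  qed
  obtain t where t: "t \<in> {0<..<1}"
    and mvt: "\<phi> 1 - \<phi> 0 = (G (a + t *\<^sub>R (b - a)) - G a) \<bullet> (b - a) - C * t * (norm (b - a))\<^sup>2"
    using mvt_simple[of 0 1 \<phi>, OF _ deriv] by auto
  have "(G (a + t *\<^sub>R (b - a)) - G a) \<bullet> (b - a) \<le> norm (G (a + t *\<^sub>R (b - a)) - G a) * norm (b - a)"
    by (rule norm_cauchy_schwarz)
  also have "\<dots> \<le> C * (t * norm (b - a)) * norm (b - a)"
    using lipschitz_onD[OF lip, of "a + t *\<^sub>R (b - a)" a] t
    by (intro mult_right_mono) (auto simp: dist_norm)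
  finally have "\<phi> 1 \<le> \<phi> 0" using mvt by (simp add: power2_eq_square algebra_simps)
  then show ?thesis unfolding \<phi>_def by simp
qed

lemma convex_on_gradient_inequality:
  fixes f :: "'a::euclidean_space \<Rightarrow> real"
  assumes convex: "convex_on UNIV f" and grad: "\<And>z. (f has_derivative (\<lambda>h. G z \<bullet> h)) (at z)"
  shows "f a + G a \<bullet> (b - a) \<le> f b"
proof -
  define \<phi> where "\<phi> t = f (a + t *\<^sub>R (b - a))" for t
  have "convex_on UNIV \<phi>"
  proof (rule convex_onI)
    fix t s r :: real assume "0 < t" "t < 1"
    have "a + ((1 - t) * s + t * r) *\<^sub>R (b - a) = (1 - t) *\<^sub>R (a + s *\<^sub>R (b - a)) + t *\<^sub>R (a + r *\<^sub>R (b - a))"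
      by (simp add: algebra_simps)
    then show "\<phi> ((1 - t) *\<^sub>R s + t *\<^sub>R r) \<le> (1 - t) * \<phi> s + t * \<phi> r"
      unfolding \<phi>_def using convex_onD[OF convex, of t] \<open>0 < t\<close> \<open>t < 1\<close> by simp
  qed auto
  moreover have "(\<phi> has_field_derivative (G a \<bullet> (b - a))) (at 0)"
  proof -
    have "(\<phi> has_derivative (\<lambda>h. G (a + 0 *\<^sub>R (b - a)) \<bullet> (h *\<^sub>R (b - a)))) (at 0)"
      unfolding \<phi>_def
      by (rule has_derivative_compose[where g = f, OF _ grad]) (auto intro!: derivative_eq_intros)
    moreover have "(\<lambda>h. h * (G a \<bullet> (b - a))) = (*) (G a \<bullet> (b - a))"
      by (auto simp: mult.commute)
    ultimately show ?thesis by (simp add: has_field_derivative_def)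
  qed
  ultimately have "\<phi> 1 - \<phi> 0 \<ge> (G a \<bullet> (b - a)) * (1 - 0)"
    by (intro convex_on_imp_above_tangent[where A = UNIV]) auto
  then show ?thesis unfolding \<phi>_def by simp
qed

lemma closed_fun_limit_le:
  assumes closed: "closed_fun g" and u: "u \<longlonglongrightarrow> z"
    and bound: "\<And>j. g (u j) \<le> ereal (G j)" and G: "G \<longlonglongrightarrow> \<gamma>"
  shows "g z \<le> ereal \<gamma>"
proof -
  have "(z, \<gamma>) \<in> {(x, r::real). g x \<le> ereal r}"
    using closed unfolding closed_fun_def
  proof (rule closed_sequentially)
    show "(\<lambda>j. (u j, G j)) j \<in> {(x, r::real). g x \<le> ereal r}" for j using bound by simp
    show "(\<lambda>j. (u j, G j)) \<longlonglongrightarrow> (z, \<gamma>)" by (intro tendsto_Pair u G)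
  qed
  then show ?thesis by simp
qed

lemma sufficient_decrease_convergent:
  fixes H a :: "nat \<Rightarrow> real"
  assumes decrease: "\<And>k. H (Suc k) + c * a k \<le> H k" and c: "c > 0"
    and nonneg: "\<And>k. 0 \<le> a k" and bounded: "\<And>k. m \<le> H k"
  shows "convergent H" and "a \<longlonglongrightarrow> 0"
proof -
  have "decseq H"
  proof (rule decseq_SucI)
    fix k
    have "0 \<le> c * a k" using c nonneg[of k] by simp
    then show "H (Suc k) \<le> H k" using decrease[of k] by linarith
  qed
  then obtain \<zeta> where lim: "H \<longlonglongrightarrow> \<zeta>" using bounded decseq_convergent by blast
  then show "convergent H" by (auto simp: convergent_def)
  from lim have "(\<lambda>k. (H k - H (Suc k)) / c) \<longlonglongrightarrow> (\<zeta> - \<zeta>) / c"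
    by (intro tendsto_divide tendsto_diff lim LIMSEQ_Suc[OF lim] tendsto_const) (use c in simp)
  moreover have "a k \<le> (H k - H (Suc k)) / c" for k
    using decrease[of k] c by (simp add: field_simps)
  ultimately show "a \<longlonglongrightarrow> 0"
    using nonneg by (intro tendsto_sandwich[of "\<lambda>k. 0" a sequentially "\<lambda>k. (H k - H (Suc k)) / c"]) auto
qed

locale extrapolated_prox_gradient =
  fixes g :: "'a::euclidean_space \<Rightarrow> ereal"
    and f1 f2 :: "'a \<Rightarrow> real"
    and grad1 grad2 :: "'a \<Rightarrow> 'a"
    and L l :: real
    and x y :: "nat \<Rightarrow> 'a"
    and \<beta> :: "nat \<Rightarrow> real"
  assumes g_proper: "proper_fun g" and g_closed: "closed_fun g" and g_convex: "convex_fun g"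
    and f1_convex: "convex_on UNIV f1" and f2_convex: "convex_on UNIV f2"
    and f1_grad: "\<And>z. (f1 has_derivative (\<lambda>h. grad1 z \<bullet> h)) (at z)"
    and f2_grad: "\<And>z. (f2 has_derivative (\<lambda>h. grad2 z \<bullet> h)) (at z)"
    and L_pos: "L > 0" and l_nonneg: "l \<ge> 0"
    and grad1_lip: "L-lipschitz_on UNIV grad1"
    and grad2_lip: "l-lipschitz_on UNIV grad2"
    and x0_dom: "g (x 0) < \<infinity>"
    and y_def: "\<And>k. y k = x k + \<beta> k *\<^sub>R (x k - x (k - 1))"
    and x_step: "\<And>k. is_prox (\<lambda>z. ereal (1 / L) * g z)
                          (y k - (1 / L) *\<^sub>R (grad1 (y k) - grad2 (y k))) (x (Suc k))"
begin

definition grad_f :: "'a \<Rightarrow> 'a" where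
  "grad_f z = grad1 z - grad2 z"

definition obj :: "nat \<Rightarrow> real" where
  "obj k = f1 (x k) - f2 (x k) + real_of_ereal (g (x k))"

text \<open>Truncated subtraction makes step 0 = 0, matching the convention x(-1) = x(0).\<close>
definition step :: "nat \<Rightarrow> real" where
  "step k = norm (x k - x (k - 1))"

lemma g_not_minf: "g z \<noteq> -\<infinity>"
  using g_proper by (simp add: proper_fun_def)

lemma prox_step:
  assumes "g w \<noteq> \<infinity>"
  shows "g (x (Suc k)) \<noteq> \<infinity>"
    and "real_of_ereal (g (x (Suc k))) + grad_f (y k) \<bullet> (x (Suc k) - y k)
           + L / 2 * (norm (x (Suc k) - y k))\<^sup>2 + L / 2 * (norm (w - x (Suc k)))\<^sup>2
         \<le> real_of_ereal (g w) + grad_f (y k) \<bullet> (w - y k) + L / 2 * (norm (w - y k))\<^sup>2"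
  using prox_gradient_step[OF g_convex g_not_minf L_pos x_step[of k, folded grad_f_def] assms] .

lemma g_iterate_finite: "g (x k) \<noteq> \<infinity>"
  using x0_dom prox_step(1) by (induction k) auto

lemma g_iterate_eq: "g (x k) = ereal (real_of_ereal (g (x k)))"
  using g_iterate_finite g_not_minf by (cases "g (x k)") auto

lemma objective_iterate_eq: "ereal (f1 (x k) - f2 (x k)) + g (x k) = ereal (obj k)"
  by (subst g_iterate_eq) (simp add: obj_def)

lemma sufficient_decrease:
  "obj (Suc k) + L / 2 * (step (Suc k))\<^sup>2 \<le> obj k + (L + l) / 2 * (\<beta> k * step k)\<^sup>2"
proof -
  define z w v where "z = x (Suc k)" and "w = x k" and "v = y k"
  have prox: "real_of_ereal (g z) + grad_f v \<bullet> (z - v) + L / 2 * (norm (z - v))\<^sup>2 + L / 2 * (norm (w - z))\<^sup>2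
      \<le> real_of_ereal (g w) + grad_f v \<bullet> (w - v) + L / 2 * (norm (w - v))\<^sup>2"
    using prox_step(2)[OF g_iterate_finite] unfolding z_def w_def v_def .
  have "f1 z \<le> f1 v + grad1 v \<bullet> (z - v) + L / 2 * (norm (z - v))\<^sup>2"
    by (rule descent_lemma[OF f1_grad grad1_lip])
  moreover have "f2 w \<le> f2 v + grad2 v \<bullet> (w - v) + l / 2 * (norm (w - v))\<^sup>2"
    by (rule descent_lemma[OF f2_grad grad2_lip])
  moreover have "f1 v + grad1 v \<bullet> (w - v) \<le> f1 w"
    by (rule convex_on_gradient_inequality[OF f1_convex f1_grad])
  moreover have "f2 v + grad2 v \<bullet> (z - v) \<le> f2 z"
    by (rule convex_on_gradient_inequality[OF f2_convex f2_grad])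
  moreover have "grad_f v \<bullet> (z - v) = grad1 v \<bullet> (z - v) - grad2 v \<bullet> (z - v)"
    and "grad_f v \<bullet> (w - v) = grad1 v \<bullet> (w - v) - grad2 v \<bullet> (w - v)"
    by (simp_all add: grad_f_def inner_diff_left)
  moreover have "norm (w - v) = \<bar>\<beta> k\<bar> * step k"
    by (simp add: w_def v_def y_def step_def)
  then have "(L + l) / 2 * (\<beta> k * step k)\<^sup>2 = L / 2 * (norm (w - v))\<^sup>2 + l / 2 * (norm (w - v))\<^sup>2"
    by (simp add: power_mult_distrib algebra_simps)
  moreover have "L / 2 * (norm (w - z))\<^sup>2 = L / 2 * (step (Suc k))\<^sup>2"
    by (simp add: w_def z_def step_def norm_minus_commute)
  ultimately show ?thesis
    using prox unfolding obj_def z_def[symmetric] w_def[symmetric] by linarith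
qed

lemma objective_convergent:
  assumes beta: "\<And>k. 0 \<le> \<beta> k" "\<And>k. \<beta> k \<le> b" and b: "(L + l) * b\<^sup>2 < L"
    and bounded: "\<And>k. m \<le> obj k"
  shows "convergent obj" and "step \<longlonglongrightarrow> 0"
proof -
  define c where "c = (L - (L + l) * b\<^sup>2) / 2"
  define H where "H k = obj k + L / 2 * (step k)\<^sup>2" for k
  have c: "c > 0" using b by (simp add: c_def)
  have decrease: "H (Suc k) + c * (step k)\<^sup>2 \<le> H k" for k
  proof -
    have "(\<beta> k * step k)\<^sup>2 \<le> (b * step k)\<^sup>2"
      using beta by (intro power_mono mult_right_mono) (auto simp: step_def)
    then have "(L + l) / 2 * (\<beta> k * step k)\<^sup>2 \<le> (L + l) / 2 * (b * step k)\<^sup>2"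
      using L_pos l_nonneg by (intro mult_left_mono) auto
    moreover have "(L + l) / 2 * (b * step k)\<^sup>2 = L / 2 * (step k)\<^sup>2 - c * (step k)\<^sup>2"
      by (simp add: c_def power_mult_distrib field_simps)
    ultimately show ?thesis using sufficient_decrease[of k] unfolding H_def by linarith
  qed
  have lower: "m \<le> H k" for k
    unfolding H_def using bounded[of k] L_pos by (intro add_increasing2) auto
  have nonneg: "0 \<le> (step k)\<^sup>2" for k by simp
  note H = sufficient_decrease_convergent[where a = "\<lambda>k. (step k)\<^sup>2", OF decrease c nonneg lower]
  then obtain \<zeta> where "H \<longlonglongrightarrow> \<zeta>" by (auto simp: convergent_def)
  then have "(\<lambda>k. H k - L / 2 * (step k)\<^sup>2) \<longlonglongrightarrow> \<zeta> - L / 2 * 0"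
    by (intro tendsto_diff tendsto_mult_left H(2))
  then show "convergent obj" by (auto simp: convergent_def H_def)
  have "(\<lambda>k. sqrt ((step k)\<^sup>2)) \<longlonglongrightarrow> sqrt 0" by (intro tendsto_real_sqrt H(2))
  moreover have "(\<lambda>k. sqrt ((step k)\<^sup>2)) = step" by (auto simp: step_def)
  ultimately show "step \<longlonglongrightarrow> 0" by simp
qed

lemma iterates_tendsto_accumulation_point:
  assumes step: "step \<longlonglongrightarrow> 0" and beta: "\<And>k. \<bar>\<beta> k\<bar> \<le> b"
    and r: "strict_mono r" and xr: "(\<lambda>j. x (r j)) \<longlonglongrightarrow> z"
  shows "(\<lambda>j. x (Suc (r j))) \<longlonglongrightarrow> z" and "(\<lambda>j. y (r j)) \<longlonglongrightarrow> z"
proof -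
  have "(\<lambda>j. step (Suc (r j))) \<longlonglongrightarrow> 0"
    using LIMSEQ_subseq_LIMSEQ[OF LIMSEQ_Suc[OF step] r] by (simp add: comp_def)
  then have "(\<lambda>j. x (Suc (r j)) - x (r j)) \<longlonglongrightarrow> 0"
    by (simp add: step_def tendsto_norm_zero_iff)
  from tendsto_add[OF xr this] show "(\<lambda>j. x (Suc (r j))) \<longlonglongrightarrow> z" by simp
  have lim: "(\<lambda>j. b * step (r j)) \<longlonglongrightarrow> b * 0"
    using LIMSEQ_subseq_LIMSEQ[OF step r] by (intro tendsto_mult_left) (simp add: comp_def)
  have bound: "norm (y (r j) - x (r j)) \<le> b * step (r j)" for j
  proof -
    have "norm (y (r j) - x (r j)) = \<bar>\<beta> (r j)\<bar> * step (r j)" by (simp add: y_def step_def)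
    also have "\<dots> \<le> b * step (r j)" using beta by (rule mult_right_mono) (simp add: step_def)
    finally show ?thesis .
  qed
  have "(\<lambda>j. y (r j) - x (r j)) \<longlonglongrightarrow> 0"
    by (rule Lim_null_comparison[OF always_eventually[OF allI[OF bound]]]) (use lim in simp)
  from tendsto_add[OF xr this] show "(\<lambda>j. y (r j)) \<longlonglongrightarrow> z" by simp
qed

lemma grad_f_continuous: "isCont grad_f z"
proof -
  have "isCont grad1 z" "isCont grad2 z"
    using lipschitz_on_continuous_on[OF grad1_lip] lipschitz_on_continuous_on[OF grad2_lip]
    by (auto simp: continuous_on_eq_continuous_at)
  then show ?thesis unfolding grad_f_def[abs_def] by (rule isCont_diff)
qed

lemma objective_at_accumulation_point:
  assumes obj: "obj \<longlonglongrightarrow> \<zeta>" and step: "step \<longlonglongrightarrow> 0" and beta: "\<And>k. \<bar>\<beta> k\<bar> \<le> b"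
    and acc: "accumulation_point x z"
  shows "ereal (f1 z - f2 z) + g z = ereal \<zeta>"
proof -
  obtain r where r: "strict_mono r" and xr: "(\<lambda>j. x (r j)) \<longlonglongrightarrow> z"
    using acc by (auto simp: accumulation_point_def comp_def)
  define s where "s j = Suc (r j)" for j
  define G where "G k = real_of_ereal (g (x k))" for k
  define \<gamma> where "\<gamma> = \<zeta> - f1 z + f2 z"
  note xs = iterates_tendsto_accumulation_point(1)[OF step beta r xr, folded s_def]
  note yr = iterates_tendsto_accumulation_point(2)[OF step beta r xr]
  have f_cont: "isCont f1 q" "isCont f2 q" for q
    using has_derivative_continuous[OF f1_grad] has_derivative_continuous[OF f2_grad] by auto
  have "(\<lambda>j. obj (s j)) \<longlonglongrightarrow> \<zeta>"
    using LIMSEQ_subseq_LIMSEQ[OF LIMSEQ_Suc[OF obj] r] by (simp add: comp_def s_def)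
  then have "(\<lambda>j. obj (s j) - f1 (x (s j)) + f2 (x (s j))) \<longlonglongrightarrow> \<gamma>"
    unfolding \<gamma>_def
    by (intro tendsto_add tendsto_diff isCont_tendsto_compose[OF f_cont(1) xs]
        isCont_tendsto_compose[OF f_cont(2) xs])
  then have G_lim: "(\<lambda>j. G (s j)) \<longlonglongrightarrow> \<gamma>" by (simp add: obj_def G_def)
  have "g z \<le> ereal \<gamma>"
    using closed_fun_limit_le[OF g_closed xs _ G_lim] g_iterate_eq by (simp add: G_def)
  then obtain c where gz: "g z = ereal c" and "c \<le> \<gamma>"
    using g_not_minf[of z] by (cases "g z") auto
  have prox_at_z: "G (s j) + grad_f (y (r j)) \<bullet> (x (s j) - y (r j)) + L / 2 * (norm (x (s j) - y (r j)))\<^sup>2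
      \<le> c + grad_f (y (r j)) \<bullet> (z - y (r j)) + L / 2 * (norm (z - y (r j)))\<^sup>2" for j
  proof -
    have "0 \<le> L / 2 * (norm (z - x (s j)))\<^sup>2" using L_pos by simp
    then show ?thesis using prox_step(2)[of z "r j"] gz by (simp add: G_def s_def)
  qed
  have grad_lim: "(\<lambda>j. grad_f (y (r j))) \<longlonglongrightarrow> grad_f z"
    by (rule isCont_tendsto_compose[OF grad_f_continuous yr])
  have "\<gamma> + grad_f z \<bullet> (z - z) + L / 2 * (norm (z - z))\<^sup>2
      \<le> c + grad_f z \<bullet> (z - z) + L / 2 * (norm (z - z))\<^sup>2"
  proof (rule tendsto_le[OF trivial_limit_sequentially _ _ always_eventually[OF allI[OF prox_at_z]]])
    show "(\<lambda>j. c + grad_f (y (r j)) \<bullet> (z - y (r j)) + L / 2 * (norm (z - y (r j)))\<^sup>2)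
        \<longlonglongrightarrow> c + grad_f z \<bullet> (z - z) + L / 2 * (norm (z - z))\<^sup>2"
      by (intro tendsto_add tendsto_const tendsto_inner tendsto_diff tendsto_mult_left tendsto_power
          tendsto_norm grad_lim yr)
    show "(\<lambda>j. G (s j) + grad_f (y (r j)) \<bullet> (x (s j) - y (r j)) + L / 2 * (norm (x (s j) - y (r j)))\<^sup>2)
        \<longlonglongrightarrow> \<gamma> + grad_f z \<bullet> (z - z) + L / 2 * (norm (z - z))\<^sup>2"
      by (intro tendsto_add tendsto_inner tendsto_diff tendsto_mult_left tendsto_power
          tendsto_norm G_lim grad_lim xs yr)
  qed
  with \<open>c \<le> \<gamma>\<close> have "c = \<gamma>" by simp
  then show ?thesis using gz by (simp add: \<gamma>_def)
qed

end

theorem proposition3p5: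
  fixes g :: "'a::euclidean_space \<Rightarrow> ereal"
    and f1 f2 :: "'a \<Rightarrow> real"
    and grad1 grad2 :: "'a \<Rightarrow> 'a"
    and L l :: real
    and x y :: "nat \<Rightarrow> 'a"
    and \<beta> :: "nat \<Rightarrow> real"
    and F :: "'a \<Rightarrow> ereal"
  assumes g_proper: "proper_fun g" and g_closed: "closed_fun g" and g_convex: "convex_fun g"
    and f1_convex: "convex_on UNIV f1" and f2_convex: "convex_on UNIV f2"
    and f1_grad: "\<And>z. (f1 has_derivative (\<lambda>h. grad1 z \<bullet> h)) (at z)"
    and f2_grad: "\<And>z. (f2 has_derivative (\<lambda>h. grad2 z \<bullet> h)) (at z)"
    and L_pos: "L > 0" and l_nonneg: "l \<ge> 0" and L_ge: "L \<ge> l"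
    and grad1_lip: "L-lipschitz_on UNIV grad1"
    and grad2_lip: "l-lipschitz_on UNIV grad2"
    and F_def: "\<And>z. F z = ereal (f1 z - f2 z) + g z"
    and inf_finite: "(INF z. F z) > -\<infinity>"
    and inf_attained: "\<exists>z. F z = (INF w. F w)"
    and x0_dom: "g (x 0) < \<infinity>"
    and beta_range: "\<And>k. 0 \<le> \<beta> k \<and> \<beta> k \<le> sqrt (L / (L + l))"
    and beta_sup: "(SUP k. \<beta> k) < sqrt (L / (L + l))"
    and y_def: "\<And>k. y k = x k + \<beta> k *\<^sub>R (x k - x (k - 1))"
    and x_step: "\<And>k. is_prox (\<lambda>z. ereal (1 / L) * g z)
                          (y k - (1 / L) *\<^sub>R (grad1 (y k) - grad2 (y k))) (x (Suc k))"
  shows "\<exists>\<zeta>::real. (\<lambda>k. F (x k)) \<longlonglongrightarrow> ereal \<zeta> \<and> (\<forall>z. accumulation_point x z \<longrightarrow> F z = ereal \<zeta>)"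
proof -
  interpret extrapolated_prox_gradient g f1 f2 grad1 grad2 L l x y \<beta>
    by unfold_locales (fact assms)+
  have F_iterate: "F (x k) = ereal (obj k)" for k
    using F_def objective_iterate_eq by simp
  define b where "b = (SUP k. \<beta> k)"
  have beta_nonneg: "0 \<le> \<beta> k" for k using beta_range by blast
  have "bdd_above (range \<beta>)" using beta_range by (intro bdd_aboveI2) blast
  then have beta_le: "\<beta> k \<le> b" for k unfolding b_def by (intro cSUP_upper) simp_all
  have b_bound: "(L + l) * b\<^sup>2 < L"
    using beta_sup L_pos l_nonneg beta_nonneg[of 0] beta_le[of 0]
    by (intro mult_square_less_of_less_sqrt_divide) (simp_all add: b_def)
  obtain m where m: "(INF z. F z) = ereal m"
    using inf_finite INF_lower[of "x 0" UNIV F] F_iterate[of 0] by (cases "INF z. F z") auto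
  then have lower: "m \<le> obj k" for k
    using INF_lower[of "x k" UNIV F] F_iterate[of k] by simp
  note convergence = objective_convergent[OF beta_nonneg beta_le b_bound lower]
  then obtain \<zeta> where obj: "obj \<longlonglongrightarrow> \<zeta>" by (auto simp: convergent_def)
  have "\<bar>\<beta> k\<bar> \<le> b" for k using beta_nonneg[of k] beta_le[of k] by simp
  note accumulation = objective_at_accumulation_point[OF obj convergence(2) this]
  show ?thesis
  proof (intro exI conjI allI impI)
    show "(\<lambda>k. F (x k)) \<longlonglongrightarrow> ereal \<zeta>" using obj by (simp add: F_iterate)
    show "F z = ereal \<zeta>" if "accumulation_point x z" for z
      using accumulation[OF that] by (simp add: F_def)
  qed
qed

end
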